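(* Let $(\mathcal{P},d)$ be a 1-2-metric and $\alpha>0$. A strategy profile of the greedy-routing network creation game on $(\mathcal{P},d)$ with edge price $\alpha$ is a Nash equilibrium if and only if its network is a Balanced Domination Set Graph for $\alpha$ (BDSG$(\alpha)$).
   Context: A 1-2-metric is a finite metric space $(\mathcal{P},d)$ with $d(u,v)\in\{1,2\}$ for all distinct $u,v$. Game: agents are the points of $\mathcal{P}$; agent $u$'s strategy is $S_u\subseteq\mathcal{P}\setminus\{u\}$; a profile $\mathbf{s}$ defines the directed network $G(\mathbf{s})$ with arcs $(u,v)$, $v\in S_u$, of length $d(u,v)$. A greedy path from $u$ to $v$ is a directed path $u=x_1,\dots,x_j=v$ of arcs with $d(x_i,v)>d(x_{i+1},v)$ for all $i$. $\mathrm{stretch}(u,v)$ is the minimum length of a greedy path from $u$ to $v$ divided by $d(u,v)$, or a fixed sufficiently large penalty constant $Z$ if none exists. Cost: $c_u(\mathbf{s})=\sum_{v\ne u}\mathrm{stretch}_{G(\mathbf{s})}(u,v)+\alpha|S_u|$. A Nash equilibrium is a profile in which no agent can strictly decrease its cost by changing its own strategy. Notation for a directed network $G$ on $\mathcal{P}$ and node $u$: $N(u)$ is the set of out-neighbours of $u$; $W_2(u)=\{v\in N(u):d(u,v)=2\}$; $W_{1\to1}(u)$ is the set of nodes $w\ne u$ such that there is $v$ with $d(u,v)=d(v,w)=1$ and $(u,v),(v,w)$ arcs of $G$; $W_2^+(u)=W_2(u)\cap W_{1\to1}(u)$. $G^1_{-u}$ is the directed graph on $\mathcal{P}\setminus\{u\}$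 with arc $(v,w)$ for every pair with $d(v,w)=1$. A vertex set $D$ of a directed graph $H$ is dominating if every vertex of $H$ outside $D$ has an in-neighbour in $D$. A Domination Set Graph (DSG) is a directed network $G$ on $\mathcal{P}$ such that (i) $G$ contains every arc $(v,w)$ with $d(v,w)=1$; (ii) for every $u$, $N(u)$ is dominating in $G^1_{-u}$; (iii) for every $u$ there is no set $N'\subseteq\mathcal{P}\setminus\{u\}$ obtained from $N(u)$ by deleting one element or replacing one element by another, such that $N'$ contains all $v$ with $d(u,v)=1$, $N'$ is dominating in $G^1_{-u}$, and $|\{v\in N':d(u,v)=2\}\cap W_{1\to1}(u)|<|W_2^+(u)|$. A BDSG$(\alpha)$ is a DSG in which, for every node $u$, the quantity $(\alpha-\tfrac12)|W_2(u)|+\tfrac12|W_2^+(u)|$ is minimum among all choices of an out-neighbourhood $N'\subseteq\mathcal{P}\setminus\{u\}$ of $u$ (all other arcs unchanged) that contain every $v$ with $d(u,v)=1$ and are dominating in $G^1_{-u}$ (the sets $W_2,W_2^+$ being computed with respect to $N'$). *)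

theory Defs
  imports Complex_Main
begin

definition one_two_metric :: "'a set \<Rightarrow> ('a \<Rightarrow> 'a \<Rightarrow> nat) \<Rightarrow> bool" where
  "one_two_metric P d \<longleftrightarrow>
     (\<forall>u\<in>P. d u u = 0) \<and>
     (\<forall>u\<in>P. \<forall>v\<in>P. d u v = d v u) \<and>
     (\<forall>u\<in>P. \<forall>v\<in>P. \<forall>w\<in>P. d u w \<le> d u v + d v w) \<and>
     (\<forall>u\<in>P. \<forall>v\<in>P. u \<noteq> v \<longrightarrow> d u v \<in> {1, 2})"

definition profile :: "'a set \<Rightarrow> ('a \<Rightarrow> 'a set) \<Rightarrow> bool" where
  "profile P s \<longleftrightarrow> (\<forall>u\<in>P. s u \<subseteq> P - {u})"

definition net :: "'a set \<Rightarrow> ('a \<Rightarrow> 'a set) \<Rightarrow> ('a \<times> 'a) set" where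
  "net P s = {(u, v). u \<in> P \<and> v \<in> s u}"

definition greedy_path :: "('a \<times> 'a) set \<Rightarrow> ('a \<Rightarrow> 'a \<Rightarrow> nat) \<Rightarrow> 'a \<Rightarrow> 'a \<Rightarrow> 'a list \<Rightarrow> bool" where
  "greedy_path E d u v xs \<longleftrightarrow> xs \<noteq> [] \<and> hd xs = u \<and> last xs = v \<and>
     (\<forall>i. Suc i < length xs \<longrightarrow>
        (xs ! i, xs ! Suc i) \<in> E \<and> d (xs ! Suc i) v < d (xs ! i) v)"

definition path_len :: "('a \<Rightarrow> 'a \<Rightarrow> nat) \<Rightarrow> 'a list \<Rightarrow> nat" where
  "path_len d xs = (\<Sum>i<length xs - 1. d (xs ! i) (xs ! Suc i))"

definition stretch :: "real \<Rightarrow> ('a \<times> 'a) set \<Rightarrow> ('a \<Rightarrow> 'a \<Rightarrow> nat) \<Rightarrow> 'a \<Rightarrow> 'a \<Rightarrow> real" where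
  "stretch Z E d u v =
     (if \<exists>xs. greedy_path E d u v xs
      then real (LEAST l. \<exists>xs. greedy_path E d u v xs \<and> l = path_len d xs) / real (d u v)
      else Z)"

definition cost :: "'a set \<Rightarrow> ('a \<Rightarrow> 'a \<Rightarrow> nat) \<Rightarrow> real \<Rightarrow> real \<Rightarrow> ('a \<Rightarrow> 'a set) \<Rightarrow> 'a \<Rightarrow> real" where
  "cost P d \<alpha> Z s u =
     (\<Sum>v\<in>P - {u}. stretch Z (net P s) d u v) + \<alpha> * real (card (s u))"

definition nash :: "'a set \<Rightarrow> ('a \<Rightarrow> 'a \<Rightarrow> nat) \<Rightarrow> real \<Rightarrow> real \<Rightarrow> ('a \<Rightarrow> 'a set) \<Rightarrow> bool" where
  "nash P d \<alpha> Z s \<longleftrightarrow>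
     (\<forall>u\<in>P. \<forall>S'. S' \<subseteq> P - {u} \<longrightarrow> cost P d \<alpha> Z s u \<le> cost P d \<alpha> Z (s(u := S')) u)"

definition Nb :: "('a \<times> 'a) set \<Rightarrow> 'a \<Rightarrow> 'a set" where
  "Nb E u = {v. (u, v) \<in> E}"

definition W2 :: "('a \<times> 'a) set \<Rightarrow> ('a \<Rightarrow> 'a \<Rightarrow> nat) \<Rightarrow> 'a \<Rightarrow> 'a set" where
  "W2 E d u = {v \<in> Nb E u. d u v = 2}"

definition W11 :: "('a \<times> 'a) set \<Rightarrow> ('a \<Rightarrow> 'a \<Rightarrow> nat) \<Rightarrow> 'a \<Rightarrow> 'a set" where
  "W11 E d u = {w. w \<noteq> u \<and> (\<exists>v. d u v = 1 \<and> d v w = 1 \<and> (u, v) \<in> E \<and> (v, w) \<in> E)}"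

definition W2plus :: "('a \<times> 'a) set \<Rightarrow> ('a \<Rightarrow> 'a \<Rightarrow> nat) \<Rightarrow> 'a \<Rightarrow> 'a set" where
  "W2plus E d u = W2 E d u \<inter> W11 E d u"

text \<open>D is dominating in G^1_{-u}: vertex set P - {u}, arc (v,w) iff d v w = 1.\<close>
definition dominating :: "'a set \<Rightarrow> ('a \<Rightarrow> 'a \<Rightarrow> nat) \<Rightarrow> 'a \<Rightarrow> 'a set \<Rightarrow> bool" where
  "dominating P d u D \<longleftrightarrow> D \<subseteq> P - {u} \<and>
     (\<forall>w \<in> P - {u} - D. \<exists>v\<in>D. d v w = 1)"

definition DSG :: "'a set \<Rightarrow> ('a \<Rightarrow> 'a \<Rightarrow> nat) \<Rightarrow> ('a \<times> 'a) set \<Rightarrow> bool" where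
  "DSG P d E \<longleftrightarrow> E \<subseteq> P \<times> P \<and>
     (\<forall>v\<in>P. \<forall>w\<in>P. d v w = 1 \<longrightarrow> (v, w) \<in> E) \<and>
     (\<forall>u\<in>P. dominating P d u (Nb E u)) \<and>
     (\<forall>u\<in>P. \<not> (\<exists>N'. N' \<subseteq> P - {u} \<and>
          (\<exists>x\<in>Nb E u. N' = Nb E u - {x} \<or> (\<exists>y\<in>P - {u}. N' = (Nb E u - {x}) \<union> {y})) \<and>
          {v\<in>P. d u v = 1} \<subseteq> N' \<and>
          dominating P d u N' \<and>
          card ({v\<in>N'. d u v = 2} \<inter> W11 E d u) < card (W2plus E d u)))"

definition replace_out :: "('a \<times> 'a) set \<Rightarrow> 'a \<Rightarrow> 'a set \<Rightarrow> ('a \<times> 'a) set" where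
  "replace_out E u N' = {(x, y) \<in> E. x \<noteq> u} \<union> {(u, y) | y. y \<in> N'}"

definition bal_val :: "real \<Rightarrow> ('a \<times> 'a) set \<Rightarrow> ('a \<Rightarrow> 'a \<Rightarrow> nat) \<Rightarrow> 'a \<Rightarrow> real" where
  "bal_val \<alpha> E d u = (\<alpha> - 1/2) * real (card (W2 E d u)) + 1/2 * real (card (W2plus E d u))"

definition BDSG :: "'a set \<Rightarrow> ('a \<Rightarrow> 'a \<Rightarrow> nat) \<Rightarrow> real \<Rightarrow> ('a \<times> 'a) set \<Rightarrow> bool" where
  "BDSG P d \<alpha> E \<longleftrightarrow> DSG P d E \<and>
     (\<forall>u\<in>P. \<forall>N'. N' \<subseteq> P - {u} \<and> {v\<in>P. d u v = 1} \<subseteq> N' \<and> dominating P d u N' \<longrightarrow>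
        bal_val \<alpha> E d u \<le> bal_val \<alpha> (replace_out E u N') d u)"

end

theory Submission
  imports Defs
begin

text \<open>In a 1-2-metric a greedy path has at most two arcs. Hence the stretch from u to v is 1 if
  v is an out-neighbour of u or is reached by two unit arcs, 3/2 if it is reached only through
  a first arc of length 2, and the penalty Z otherwise. Once Z exceeds the cost of buying every
  arc, an equilibrium strategy must contain all unit neighbours and dominate G^1_{-u}; given
  such strategies, the cost of u is a constant plus (\<alpha> - 1/2)|W_2(u)| + 1/2|W_2^+(u)|.
  Both Nash equilibria and BDSGs are therefore exactly the profiles of such strategies that
  minimise this quantity; the swap condition of a DSG follows from minimality as \<alpha> > 0.\<close>

lemma one_two_metricD:
  assumes "one_two_metric P d"
  shows "u \<in> P \<Longrightarrow> d u u = 0"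
    and "u \<in> P \<Longrightarrow> v \<in> P \<Longrightarrow> w \<in> P \<Longrightarrow> d u w \<le> d u v + d v w"
    and "u \<in> P \<Longrightarrow> v \<in> P \<Longrightarrow> u \<noteq> v \<Longrightarrow> d u v = 1 \<or> d u v = 2"
  using assms unfolding one_two_metric_def by auto

lemma greedy_path_dist_decreasing:
  assumes "greedy_path E d u v xs" and "i < length xs"
  shows "d (xs ! i) v + i \<le> d u v"
  using assms(2)
proof (induction i)
  case 0
  then show ?case using assms(1) by (simp add: greedy_path_def hd_conv_nth[symmetric])
next
  case (Suc i)
  then have "d (xs ! Suc i) v < d (xs ! i) v" using assms(1) by (simp add: greedy_path_def)
  with Suc show ?case by simp
qed

lemma greedy_path_cases:
  assumes met: "one_two_metric P d" and EP: "E \<subseteq> P \<times> P"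
    and u: "u \<in> P" and v: "v \<in> P" and uv: "u \<noteq> v" and g: "greedy_path E d u v xs"
  shows "xs = [u, v] \<and> (u, v) \<in> E \<or>
         (\<exists>x. xs = [u, x, v] \<and> (u, x) \<in> E \<and> (x, v) \<in> E \<and> x \<in> P \<and> d x v = 1 \<and> d u v = 2)"
proof -
  from g have ne: "xs \<noteq> []" and hd: "hd xs = u" and last: "last xs = v"
    and step: "\<And>i. Suc i < length xs \<Longrightarrow> (xs ! i, xs ! Suc i) \<in> E \<and> d (xs ! Suc i) v < d (xs ! i) v"
    unfolding greedy_path_def by auto
  have "d u v \<le> 2" using one_two_metricD(3)[OF met u v uv] by auto
  then have "length xs \<le> 3"
    using greedy_path_dist_decreasing[OF g, of "length xs - 1"] ne by simp
  moreover have "length xs \<noteq> 1"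
    using hd last uv by (auto simp: length_Suc_conv)
  ultimately have "length xs = 2 \<or> length xs = 3"
    using ne by (cases "length xs") auto
  then consider a b where "xs = [a, b]" | a b c where "xs = [a, b, c]"
    by (auto simp: length_Suc_conv eval_nat_numeral)
  then show ?thesis
  proof cases
    case (1 a b)
    then show ?thesis using hd last step[of 0] by auto
  next
    case (2 a b c)
    with hd last have xs: "xs = [u, b, v]" by simp
    have ub: "(u, b) \<in> E" "d b v < d u v" and bv: "(b, v) \<in> E" "d v v < d b v"
      using step[of 0] step[of 1] xs by auto
    have "b \<in> P" using ub EP by auto
    with ub bv \<open>d u v \<le> 2\<close> have "d b v = 1" "d u v = 2" by auto
    then show ?thesis using xs ub bv \<open>b \<in> P\<close> by auto
  qed
qed

lemma path_len_two [simp]: "path_len d [a, b] = d a b"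
  by (simp add: path_len_def)

lemma path_len_three [simp]: "path_len d [a, b, c] = d a b + d b c"
  by (simp add: path_len_def eval_nat_numeral lessThan_Suc)

lemma greedy_path_arc: "(u, v) \<in> E \<Longrightarrow> d v v < d u v \<Longrightarrow> greedy_path E d u v [u, v]"
  by (auto simp: greedy_path_def less_Suc_eq)

lemma greedy_path_two_arcs:
  "(u, x) \<in> E \<Longrightarrow> (x, v) \<in> E \<Longrightarrow> d x v < d u v \<Longrightarrow> d v v < d x v \<Longrightarrow>
    greedy_path E d u v [u, x, v]"
  by (auto simp: greedy_path_def less_Suc_eq nth_Cons split: nat.splits)

lemma greedy_path_len_ge_dist:
  assumes met: "one_two_metric P d" and EP: "E \<subseteq> P \<times> P"
    and u: "u \<in> P" and v: "v \<in> P" and uv: "u \<noteq> v" and g: "greedy_path E d u v xs"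
  shows "d u v \<le> path_len d xs"
  using greedy_path_cases[OF met EP u v uv g]
proof
  assume "\<exists>x. xs = [u, x, v] \<and> (u, x) \<in> E \<and> (x, v) \<in> E \<and> x \<in> P \<and> d x v = 1 \<and> d u v = 2"
  then obtain x where "xs = [u, x, v]" "x \<in> P" by blast
  then show ?thesis using one_two_metricD(2)[OF met u \<open>x \<in> P\<close> v] by simp
qed auto

lemma stretch_eq_shortest:
  assumes "greedy_path E d u v xs"
    and "\<And>ys. greedy_path E d u v ys \<Longrightarrow> path_len d xs \<le> path_len d ys"
  shows "stretch Z E d u v = path_len d xs / d u v"
proof -
  have "(LEAST l. \<exists>ys. greedy_path E d u v ys \<and> l = path_len d ys) = path_len d xs"
    using assms by (intro Least_equality) auto
  then show ?thesis using assms(1) by (auto simp: stretch_def)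
qed

lemma stretch_eq_1:
  assumes met: "one_two_metric P d" and EP: "E \<subseteq> P \<times> P"
    and u: "u \<in> P" and v: "v \<in> P" and uv: "u \<noteq> v"
    and g: "greedy_path E d u v xs" and len: "path_len d xs = d u v"
  shows "stretch Z E d u v = 1"
proof -
  have "d u v > 0" using one_two_metricD(3)[OF met u v uv] by auto
  then show ?thesis
    using stretch_eq_shortest[OF g] greedy_path_len_ge_dist[OF met EP u v uv] len by simp
qed

lemma stretch_arc:
  assumes met: "one_two_metric P d" and EP: "E \<subseteq> P \<times> P"
    and u: "u \<in> P" and v: "v \<in> P" and uv: "u \<noteq> v" and "(u, v) \<in> E"
  shows "stretch Z E d u v = 1"
proof -
  have "d v v < d u v" using one_two_metricD(1,3)[OF met] u v uv by fastforce
  then show ?thesis using stretch_eq_1[OF met EP u v uv greedy_path_arc] assms by simp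
qed

lemma stretch_three_halves:
  assumes met: "one_two_metric P d" and EP: "E \<subseteq> P \<times> P"
    and u: "u \<in> P" and v: "v \<in> P" and uv: "u \<noteq> v" and d2: "d u v = 2"
    and no_arc: "(u, v) \<notin> E" and ux: "(u, x) \<in> E" and xv: "(x, v) \<in> E" and dx: "d x v = 1"
    and no_unit_hop: "\<not> (\<exists>y. (u, y) \<in> E \<and> (y, v) \<in> E \<and> d u y = 1 \<and> d y v = 1)"
  shows "stretch Z E d u v = 3/2"
proof -
  have len3: "path_len d ys = 3" if g: "greedy_path E d u v ys" for ys
  proof -
    obtain y where ys: "ys = [u, y, v]" "(u, y) \<in> E" "(y, v) \<in> E" "y \<in> P" "d y v = 1"
      using greedy_path_cases[OF met EP u v uv g] no_arc by blast
    have "y \<noteq> u" using ys d2 by auto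
    then have "d u y = 2" using one_two_metricD(3)[OF met u \<open>y \<in> P\<close>] no_unit_hop ys by auto
    then show ?thesis using ys by simp
  qed
  have "greedy_path E d u v [u, x, v]"
    using greedy_path_two_arcs[OF ux xv] one_two_metricD(1)[OF met v] d2 dx by simp
  then show ?thesis using stretch_eq_shortest len3 d2 by fastforce
qed

definition unit_reach :: "'a set \<Rightarrow> ('a \<Rightarrow> 'a \<Rightarrow> nat) \<Rightarrow> 'a \<Rightarrow> 'a set" where
  "unit_reach P d u = {w \<in> P - {u}. \<exists>v\<in>P. d u v = 1 \<and> d v w = 1}"

definition admissible :: "'a set \<Rightarrow> ('a \<Rightarrow> 'a \<Rightarrow> nat) \<Rightarrow> 'a \<Rightarrow> 'a set \<Rightarrow> bool" where
  "admissible P d u N \<longleftrightarrow> {v \<in> P. d u v = 1} \<subseteq> N \<and> dominating P d u N"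

text \<open>When all unit arcs are present, this is (\<alpha> - 1/2)|W_2(u)| + 1/2|W_2^+(u)| for N(u) = N.\<close>
definition balance :: "real \<Rightarrow> 'a set \<Rightarrow> ('a \<Rightarrow> 'a \<Rightarrow> nat) \<Rightarrow> 'a \<Rightarrow> 'a set \<Rightarrow> real" where
  "balance \<alpha> P d u N = (\<alpha> - 1/2) * real (card {v \<in> N. d u v = 2})
     + 1/2 * real (card ({v \<in> N. d u v = 2} \<inter> unit_reach P d u))"

lemma net_subset: "profile P s \<Longrightarrow> net P s \<subseteq> P \<times> P"
  by (auto simp: profile_def net_def)

lemma mem_net_iff [simp]: "(a, b) \<in> net P s \<longleftrightarrow> a \<in> P \<and> b \<in> s a"
  by (simp add: net_def)

lemma Nb_net: "u \<in> P \<Longrightarrow> Nb (net P s) u = s u"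
  by (simp add: Nb_def)

lemma replace_out_net: "u \<in> P \<Longrightarrow> replace_out (net P s) u N = net P (s(u := N))"
  by (auto simp: replace_out_def net_def split: if_splits)

lemma profile_fun_upd: "profile P s \<Longrightarrow> N \<subseteq> P - {u} \<Longrightarrow> profile P (s(u := N))"
  by (auto simp: profile_def)

lemma no_greedy_path_if_not_admissible:
  assumes met: "one_two_metric P d" and pr: "profile P s" and u: "u \<in> P"
    and not_adm: "\<not> admissible P d u (s u)"
  obtains v where "v \<in> P - {u}" and "\<not> (\<exists>xs. greedy_path (net P s) d u v xs)"
proof -
  have EP: "net P s \<subseteq> P \<times> P" using net_subset[OF pr] .
  have su: "s u \<subseteq> P - {u}" using pr u by (auto simp: profile_def)
  show ?thesis
  proof (cases "{v \<in> P. d u v = 1} \<subseteq> s u")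
    case False
    then obtain v where v: "v \<in> P" "d u v = 1" "v \<notin> s u" by auto
    then have "v \<noteq> u" using one_two_metricD(1)[OF met u] by auto
    then show ?thesis
      using that greedy_path_cases[OF met EP u \<open>v \<in> P\<close>] v by fastforce
  next
    case True
    with not_adm su obtain w where w: "w \<in> P - {u} - s u" and no_dom: "\<forall>x\<in>s u. d x w \<noteq> 1"
      unfolding admissible_def dominating_def by auto
    then show ?thesis
      using that greedy_path_cases[OF met EP u, of w] by fastforce
  qed
qed

lemma cost_ge_penalty_if_not_admissible:
  assumes met: "one_two_metric P d" and fin: "finite P" and pr: "profile P s" and u: "u \<in> P"
    and not_adm: "\<not> admissible P d u (s u)" and Z: "Z \<ge> 0" and \<alpha>: "\<alpha> \<ge> 0"
  shows "Z \<le> cost P d \<alpha> Z s u"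
proof -
  obtain v where v: "v \<in> P - {u}" and "\<not> (\<exists>xs. greedy_path (net P s) d u v xs)"
    using no_greedy_path_if_not_admissible[OF met pr u not_adm] .
  then have "stretch Z (net P s) d u v = Z" by (simp add: stretch_def)
  moreover have "stretch Z (net P s) d u v \<le> (\<Sum>v\<in>P - {u}. stretch Z (net P s) d u v)"
    using fin v Z by (intro member_le_sum) (auto simp: stretch_def)
  moreover have "0 \<le> \<alpha> * real (card (s u))" using \<alpha> by simp
  ultimately show ?thesis by (simp add: cost_def)
qed

lemma cost_buy_all:
  assumes met: "one_two_metric P d" and pr: "profile P s" and u: "u \<in> P"
    and su: "s u = P - {u}"
  shows "cost P d \<alpha> Z s u = (1 + \<alpha>) * real (card (P - {u}))"
proof -
  have "stretch Z (net P s) d u v = 1" if "v \<in> P - {u}" for v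
    using stretch_arc[OF met net_subset[OF pr] u] that su u by auto
  then show ?thesis using su by (simp add: cost_def algebra_simps)
qed

lemma stretch_if_admissible:
  assumes met: "one_two_metric P d" and pr: "profile P s" and u: "u \<in> P"
    and others: "\<forall>x\<in>P - {u}. {w \<in> P. d x w = 1} \<subseteq> s x"
    and adm: "admissible P d u (s u)" and v: "v \<in> P - {u}"
  shows "stretch Z (net P s) d u v = (if v \<in> s u \<union> unit_reach P d u then 1 else 3/2)"
proof -
  have EP: "net P s \<subseteq> P \<times> P" using net_subset[OF pr] .
  have vP: "v \<in> P" "u \<noteq> v" using v by auto
  have dvv: "d v v = 0" using one_two_metricD(1)[OF met vP(1)] .
  have su: "s u \<subseteq> P - {u}" using pr u by (auto simp: profile_def)
  have unit: "x \<in> s u" if "x \<in> P" "d u x = 1" for x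
    using adm that unfolding admissible_def by auto
  consider "v \<in> s u" | "v \<notin> s u" "v \<in> unit_reach P d u" | "v \<notin> s u" "v \<notin> unit_reach P d u"
    by blast
  then show ?thesis
  proof cases
    case 1
    then show ?thesis using stretch_arc[OF met EP u vP] u by simp
  next
    case 2
    have d2: "d u v = 2" using one_two_metricD(3)[OF met u vP] unit[OF vP(1)] 2 by auto
    obtain x where x: "x \<in> P" "d u x = 1" "d x v = 1"
      using 2 by (auto simp: unit_reach_def)
    have "x \<noteq> u" using x one_two_metricD(1)[OF met u] by auto
    then have "(u, x) \<in> net P s" "(x, v) \<in> net P s"
      using x u vP unit others by auto
    then have "greedy_path (net P s) d u v [u, x, v]"
      by (rule greedy_path_two_arcs) (use x d2 dvv in simp_all)
    then show ?thesis using stretch_eq_1[OF met EP u vP] x d2 2 by simp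
  next
    case 3
    have d2: "d u v = 2" using one_two_metricD(3)[OF met u vP] unit[OF vP(1)] 3 by auto
    obtain x where x: "x \<in> s u" "d x v = 1"
      using adm 3 v unfolding admissible_def dominating_def by blast
    have "x \<in> P - {u}" using x su by auto
    then have arcs: "(u, x) \<in> net P s" "(x, v) \<in> net P s"
      using x u vP others by auto
    have "\<not> (\<exists>y. (u, y) \<in> net P s \<and> (y, v) \<in> net P s \<and> d u y = 1 \<and> d y v = 1)"
      using 3 su vP by (auto simp: unit_reach_def)
    then show ?thesis
      using stretch_three_halves[OF met EP u vP d2 _ arcs x(2)] 3 u by simp
  qed
qed

lemma sum_stretch_if_admissible:
  assumes met: "one_two_metric P d" and fin: "finite P" and pr: "profile P s" and u: "u \<in> P"
    and others: "\<forall>x\<in>P - {u}. {w \<in> P. d x w = 1} \<subseteq> s x"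
    and adm: "admissible P d u (s u)"
  shows "(\<Sum>v\<in>P - {u}. stretch Z (net P s) d u v)
           = real (card (P - {u})) + 1/2 * real (card (P - {u} - (s u \<union> unit_reach P d u)))"
proof -
  let ?S = "P - {u}" and ?X = "s u \<union> unit_reach P d u"
  have "(\<Sum>v\<in>?S. stretch Z (net P s) d u v) = (\<Sum>v\<in>?S. 1 + (if v \<in> ?S - ?X then 1/2 else 0))"
    using stretch_if_admissible[OF met pr u others adm] by (intro sum.cong) auto
  also have "\<dots> = real (card ?S) + 1/2 * real (card (?S - ?X))"
    using fin by (simp add: sum.distrib sum.If_cases) (intro arg_cong[where f = card]; auto)
  finally show ?thesis .
qed

lemma cost_if_admissible:
  assumes met: "one_two_metric P d" and fin: "finite P" and pr: "profile P s" and u: "u \<in> P"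
    and others: "\<forall>x\<in>P - {u}. {w \<in> P. d x w = 1} \<subseteq> s x"
    and adm: "admissible P d u (s u)"
  shows "cost P d \<alpha> Z s u = real (card (P - {u})) + \<alpha> * real (card {v \<in> P. d u v = 1})
           + 1/2 * real (card ({v \<in> P. d u v = 2} - unit_reach P d u))
           + balance \<alpha> P d u (s u)"
proof -
  let ?S = "P - {u}" and ?N = "s u" and ?R = "unit_reach P d u"
  let ?A = "{v \<in> P. d u v = 1}" and ?B = "{v \<in> P. d u v = 2}" and ?N2 = "{v \<in> s u. d u v = 2}"
  have su: "?N \<subseteq> ?S" using pr u by (auto simp: profile_def)
  have A_N: "?A \<subseteq> ?N" using adm by (simp add: admissible_def)
  have dist12: "d u v = 1 \<or> d u v = 2" if "v \<in> ?S" for v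
    using one_two_metricD(3)[OF met u] that by auto
  have finB: "finite ?B" and finN: "finite ?N" using fin su finite_subset by auto
  have "(?B - ?R) \<inter> ?N = ?N2 - ?R" and "?B - ?R - ?N = ?S - (?N \<union> ?R)"
    using su A_N dist12 one_two_metricD(1)[OF met u] by auto
  then have c1: "card (?B - ?R) = card (?N2 - ?R) + card (?S - (?N \<union> ?R))"
    using card_Int_Diff[of "?B - ?R" ?N] finB by simp
  have c2: "card ?N2 = card (?N2 \<inter> ?R) + card (?N2 - ?R)"
    using card_Int_Diff[of ?N2 ?R] finN by simp
  have "?N \<inter> ?A = ?A" and "?N - ?A = ?N2"
    using su A_N dist12 by auto
  then have c3: "card ?N = card ?A + card ?N2"
    using card_Int_Diff[of ?N ?A] finN by simp
  show ?thesis
    unfolding cost_def sum_stretch_if_admissible[OF met fin pr u others adm] balance_def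
    using c1 c2 c3 by (simp add: algebra_simps)
qed

lemma cost_le_if_admissible:
  assumes met: "one_two_metric P d" and fin: "finite P" and pr: "profile P s" and u: "u \<in> P"
    and others: "\<forall>x\<in>P - {u}. {w \<in> P. d x w = 1} \<subseteq> s x"
    and adm: "admissible P d u (s u)" and \<alpha>: "\<alpha> \<ge> 0"
  shows "cost P d \<alpha> Z s u \<le> (3/2 + \<alpha>) * real (card P)"
proof -
  have "(\<Sum>v\<in>P - {u}. stretch Z (net P s) d u v) \<le> real (card (P - {u})) * (3/2)"
    using stretch_if_admissible[OF met pr u others adm] by (intro sum_bounded_above) simp
  also have "\<dots> \<le> 3/2 * real (card P)"
    using fin by (simp add: card_Diff1_le)
  finally have "(\<Sum>v\<in>P - {u}. stretch Z (net P s) d u v) \<le> 3/2 * real (card P)" .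
  moreover have "card (s u) \<le> card P"
    using pr u fin by (intro card_mono) (auto simp: profile_def)
  then have "\<alpha> * real (card (s u)) \<le> \<alpha> * real (card P)"
    using \<alpha> by (simp add: mult_left_mono)
  ultimately show ?thesis by (simp add: cost_def algebra_simps)
qed

lemma cost_le_iff_balance_le:
  assumes met: "one_two_metric P d" and fin: "finite P" and pr: "profile P s" and u: "u \<in> P"
    and others: "\<forall>x\<in>P - {u}. {w \<in> P. d x w = 1} \<subseteq> s x"
    and adm: "admissible P d u (s u)" and adm': "admissible P d u N"
  shows "cost P d \<alpha> Z s u \<le> cost P d \<alpha> Z (s(u := N)) u
           \<longleftrightarrow> balance \<alpha> P d u (s u) \<le> balance \<alpha> P d u N"
proof -
  have "profile P (s(u := N))"
    using profile_fun_upd[OF pr] adm' by (simp add: admissible_def dominating_def)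
  from cost_if_admissible[OF met fin this u] others adm'
  have "cost P d \<alpha> Z (s(u := N)) u = real (card (P - {u})) + \<alpha> * real (card {v \<in> P. d u v = 1})
           + 1/2 * real (card ({v \<in> P. d u v = 2} - unit_reach P d u)) + balance \<alpha> P d u N"
    by simp
  then show ?thesis using cost_if_admissible[OF met fin pr u others adm] by simp
qed

lemma W11_net:
  assumes pr: "profile P s" and u: "u \<in> P"
    and units: "\<forall>x\<in>P. {w \<in> P. d x w = 1} \<subseteq> s x"
  shows "W11 (net P s) d u = unit_reach P d u"
proof
  have "s x \<subseteq> P" if "x \<in> P" for x using pr that by (auto simp: profile_def)
  then show "W11 (net P s) d u \<subseteq> unit_reach P d u"
    by (auto simp: W11_def unit_reach_def)
  show "unit_reach P d u \<subseteq> W11 (net P s) d u"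
    using u units by (auto simp: W11_def unit_reach_def)
qed

lemma bal_val_net:
  assumes pr: "profile P s" and u: "u \<in> P"
    and units: "\<forall>x\<in>P. {w \<in> P. d x w = 1} \<subseteq> s x"
  shows "bal_val \<alpha> (net P s) d u = balance \<alpha> P d u (s u)"
  unfolding bal_val_def balance_def W2plus_def W2_def Nb_net[OF u] W11_net[OF assms] ..

lemma bal_val_replace_out_net:
  assumes pr: "profile P s" and u: "u \<in> P"
    and units: "\<forall>x\<in>P. {w \<in> P. d x w = 1} \<subseteq> s x" and adm: "admissible P d u N"
  shows "bal_val \<alpha> (replace_out (net P s) u N) d u = balance \<alpha> P d u N"
proof -
  have "profile P (s(u := N))"
    using profile_fun_upd[OF pr] adm by (simp add: admissible_def dominating_def)
  moreover have "\<forall>x\<in>P. {w \<in> P. d x w = 1} \<subseteq> (s(u := N)) x"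
    using units adm by (simp add: admissible_def)
  ultimately show ?thesis
    using bal_val_net[of P "s(u := N)" u] u by (simp add: replace_out_net)
qed

lemma card_Int_swap_bounds:
  assumes fin: "finite N" and x: "x \<in> N" and swap: "N' = N - {x} \<or> N' = N - {x} \<union> {y}"
    and keep: "x \<in> B \<or> x \<in> N'"
  shows "card (N' \<inter> B) \<le> card (N \<inter> B)" and "card (N \<inter> B) \<le> card (N' \<inter> B) + 1"
proof -
  have fin': "finite (N' \<inter> B)" using fin swap by auto
  have "card (N \<inter> B) \<le> card (insert x (N' \<inter> B))"
    using fin' swap by (intro card_mono) auto
  then show "card (N \<inter> B) \<le> card (N' \<inter> B) + 1"
    using fin' by (simp add: card_insert_if split: if_splits)
  show "card (N' \<inter> B) \<le> card (N \<inter> B)"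
  proof (cases "N' = N - {x}")
    case True
    then show ?thesis using fin by (intro card_mono) auto
  next
    case False
    with swap have N': "N' = N - {x} \<union> {y}" by simp
    show ?thesis
    proof (cases "x \<in> B")
      case True
      have "card (N' \<inter> B) \<le> card (insert y (N \<inter> B - {x}))"
        using fin N' by (intro card_mono) auto
      also have "\<dots> \<le> card (N \<inter> B - {x}) + 1"
        using fin by (simp add: card_insert_if)
      also have "\<dots> = card (N \<inter> B)"
      proof -
        have "0 < card (N \<inter> B)" using fin x True by (auto simp: card_gt_0_iff)
        then show ?thesis using x True by (simp add: card_Diff_singleton)
      qed
      finally show ?thesis .
    next
      case False
      with keep N' x have "N' = N" by auto
      then show ?thesis by simp
    qed
  qed
qed

text \<open>A swap lowers |W_2(u)| by at most one, so also losing an element of W_2^+(u) would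
  lower the balance by at least min(1/2, \<alpha>) > 0.\<close>
lemma balance_min_no_improving_swap:
  assumes fin: "finite N" and \<alpha>: "\<alpha> > 0" and x: "x \<in> N"
    and swap: "N' = N - {x} \<or> N' = N - {x} \<union> {y}" and keep: "d u x = 2 \<or> x \<in> N'"
    and le: "balance \<alpha> P d u N \<le> balance \<alpha> P d u N'"
  shows "card ({v \<in> N. d u v = 2} \<inter> unit_reach P d u)
           \<le> card ({v \<in> N'. d u v = 2} \<inter> unit_reach P d u)"
proof -
  let ?B = "{v. d u v = 2}"
  have far: "{v \<in> M. d u v = 2} = M \<inter> ?B" for M by auto
  define a a' r r' where "a = card (N \<inter> ?B)" and "a' = card (N' \<inter> ?B)"
    and "r = card (N \<inter> ?B \<inter> unit_reach P d u)" and "r' = card (N' \<inter> ?B \<inter> unit_reach P d u)"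
  have bal: "(\<alpha> - 1/2) * a + 1/2 * r \<le> (\<alpha> - 1/2) * a' + 1/2 * r'"
    using le by (simp add: balance_def far a_def a'_def r_def r'_def)
  from card_Int_swap_bounds[OF fin x swap, of ?B] keep
  consider "a' = a" | "a = a' + 1" by (fastforce simp: a_def a'_def)
  then have "r \<le> r'"
  proof cases
    case 1
    then show ?thesis using bal by simp
  next
    case 2
    then have "(\<alpha> - 1/2) * a = (\<alpha> - 1/2) * a' + (\<alpha> - 1/2)" by (simp add: algebra_simps)
    with bal \<alpha> have "real r < real r' + 1" by linarith
    then show ?thesis by simp
  qed
  then show ?thesis by (simp add: far r_def r'_def)
qed

definition balanced_profile :: "real \<Rightarrow> 'a set \<Rightarrow> ('a \<Rightarrow> 'a \<Rightarrow> nat) \<Rightarrow> ('a \<Rightarrow> 'a set) \<Rightarrow> bool" where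
  "balanced_profile \<alpha> P d s \<longleftrightarrow> (\<forall>u\<in>P. admissible P d u (s u) \<and>
     (\<forall>N. admissible P d u N \<longrightarrow> balance \<alpha> P d u (s u) \<le> balance \<alpha> P d u N))"

lemma nash_iff_balanced_profile:
  assumes met: "one_two_metric P d" and fin: "finite P" and pr: "profile P s"
    and \<alpha>: "\<alpha> > 0" and Z: "(3/2 + \<alpha>) * real (card P) < Z"
  shows "nash P d \<alpha> Z s \<longleftrightarrow> balanced_profile \<alpha> P d s"
proof -
  have "0 \<le> (3/2 + \<alpha>) * real (card P)" using \<alpha> by simp
  with Z have Z_nonneg: "Z \<ge> 0" by linarith
  show ?thesis
  proof
    assume nash: "nash P d \<alpha> Z s"
    have adm: "admissible P d u (s u)" if u: "u \<in> P" for u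
    proof (rule ccontr)
      assume "\<not> admissible P d u (s u)"
      then have "Z \<le> cost P d \<alpha> Z s u"
        using cost_ge_penalty_if_not_admissible[OF met fin pr u] Z_nonneg \<alpha> by simp
      also have "\<dots> \<le> cost P d \<alpha> Z (s(u := P - {u})) u"
        using nash u unfolding nash_def by blast
      also have "\<dots> = (1 + \<alpha>) * real (card (P - {u}))"
        using cost_buy_all[OF met profile_fun_upd[OF pr]] u by simp
      also have "\<dots> \<le> (3/2 + \<alpha>) * real (card P)"
        using \<alpha> fin by (intro mult_mono) (auto simp: card_Diff1_le)
      finally show False using Z by simp
    qed
    show "balanced_profile \<alpha> P d s"
      unfolding balanced_profile_def
    proof (intro ballI conjI allI impI)
      fix u N assume u: "u \<in> P" and adm': "admissible P d u N"
      have others: "\<forall>x\<in>P - {u}. {w \<in> P. d x w = 1} \<subseteq> s x"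
        using adm by (simp add: admissible_def)
      have "N \<subseteq> P - {u}" using adm' by (simp add: admissible_def dominating_def)
      then have "cost P d \<alpha> Z s u \<le> cost P d \<alpha> Z (s(u := N)) u"
        using nash u unfolding nash_def by blast
      then show "balance \<alpha> P d u (s u) \<le> balance \<alpha> P d u N"
        using cost_le_iff_balance_le[OF met fin pr u others adm[OF u] adm'] by simp
    qed (use adm in simp)
  next
    assume bal: "balanced_profile \<alpha> P d s"
    show "nash P d \<alpha> Z s"
      unfolding nash_def
    proof (intro ballI allI impI)
      fix u S' assume u: "u \<in> P" and S': "S' \<subseteq> P - {u}"
      have adm: "admissible P d u (s u)" and others: "\<forall>x\<in>P - {u}. {w \<in> P. d x w = 1} \<subseteq> s x"
        using bal u by (auto simp: balanced_profile_def admissible_def)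
      show "cost P d \<alpha> Z s u \<le> cost P d \<alpha> Z (s(u := S')) u"
      proof (cases "admissible P d u S'")
        case True
        then show ?thesis
          using bal u cost_le_iff_balance_le[OF met fin pr u others adm True]
          by (simp add: balanced_profile_def)
      next
        case False
        have "cost P d \<alpha> Z s u \<le> (3/2 + \<alpha>) * real (card P)"
          using cost_le_if_admissible[OF met fin pr u others adm] \<alpha> by simp
        also have "\<dots> \<le> Z" using Z by simp
        also have "\<dots> \<le> cost P d \<alpha> Z (s(u := S')) u"
          by (rule cost_ge_penalty_if_not_admissible[OF met fin profile_fun_upd[OF pr S'] u])
            (use False \<alpha> Z_nonneg in simp_all)
        finally show ?thesis .
      qed
    qed
  qed
qed

lemma balanced_profile_unit_arcs:
  "balanced_profile \<alpha> P d s \<Longrightarrow> \<forall>x\<in>P. {w \<in> P. d x w = 1} \<subseteq> s x"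
  by (simp add: balanced_profile_def admissible_def)

lemma balanced_profile_no_improving_swap:
  assumes met: "one_two_metric P d" and fin: "finite P" and pr: "profile P s" and \<alpha>: "\<alpha> > 0"
    and bal: "balanced_profile \<alpha> P d s" and u: "u \<in> P"
    and x: "x \<in> Nb (net P s) u"
    and swap: "N' = Nb (net P s) u - {x} \<or> (\<exists>y\<in>P - {u}. N' = (Nb (net P s) u - {x}) \<union> {y})"
    and unit: "{v \<in> P. d u v = 1} \<subseteq> N'" and dom: "dominating P d u N'"
  shows "card (W2plus (net P s) d u) \<le> card ({v \<in> N'. d u v = 2} \<inter> W11 (net P s) d u)"
proof -
  have units: "\<forall>x\<in>P. {w \<in> P. d x w = 1} \<subseteq> s x" using balanced_profile_unit_arcs[OF bal] .
  have su: "s u \<subseteq> P - {u}" using pr u by (auto simp: profile_def)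
  obtain y where swap': "N' = s u - {x} \<or> N' = s u - {x} \<union> {y}"
    using swap Nb_net[OF u] by blast
  have xs: "x \<in> s u" using x Nb_net[OF u] by simp
  have "d u x = 2 \<or> x \<in> N'"
    using one_two_metricD(3)[OF met u, of x] xs su unit by auto
  moreover have "balance \<alpha> P d u (s u) \<le> balance \<alpha> P d u N'"
    using bal u unit dom by (simp add: balanced_profile_def admissible_def)
  ultimately have "card ({v \<in> s u. d u v = 2} \<inter> unit_reach P d u)
      \<le> card ({v \<in> N'. d u v = 2} \<inter> unit_reach P d u)"
    using balance_min_no_improving_swap[OF _ \<alpha> xs swap'] fin su finite_subset by blast
  then show ?thesis
    by (simp add: W2plus_def W2_def Nb_net[OF u] W11_net[OF pr u units])
qed

lemma BDSG_net_iff_balanced_profile: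
  assumes met: "one_two_metric P d" and fin: "finite P" and pr: "profile P s" and \<alpha>: "\<alpha> > 0"
  shows "BDSG P d \<alpha> (net P s) \<longleftrightarrow> balanced_profile \<alpha> P d s"
proof
  assume bdsg: "BDSG P d \<alpha> (net P s)"
  then have dsg: "DSG P d (net P s)" by (simp add: BDSG_def)
  then have "\<forall>v\<in>P. \<forall>w\<in>P. d v w = 1 \<longrightarrow> (v, w) \<in> net P s" by (simp add: DSG_def)
  then have units: "\<forall>x\<in>P. {w \<in> P. d x w = 1} \<subseteq> s x" by auto
  have adm: "admissible P d u (s u)" if u: "u \<in> P" for u
    using dsg units u by (simp add: DSG_def admissible_def Nb_net)
  show "balanced_profile \<alpha> P d s"
    unfolding balanced_profile_def
  proof (intro ballI conjI allI impI)
    fix u N assume u: "u \<in> P" and adm': "admissible P d u N"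
    then have "N \<subseteq> P - {u}" "{v \<in> P. d u v = 1} \<subseteq> N" "dominating P d u N"
      by (auto simp: admissible_def dominating_def)
    then have "bal_val \<alpha> (net P s) d u \<le> bal_val \<alpha> (replace_out (net P s) u N) d u"
      using bdsg u unfolding BDSG_def by blast
    then show "balance \<alpha> P d u (s u) \<le> balance \<alpha> P d u N"
      using bal_val_net[OF pr u units] bal_val_replace_out_net[OF pr u units adm'] by simp
  qed (use adm in simp)
next
  assume bal: "balanced_profile \<alpha> P d s"
  have units: "\<forall>x\<in>P. {w \<in> P. d x w = 1} \<subseteq> s x" using balanced_profile_unit_arcs[OF bal] .
  have "DSG P d (net P s)"
    unfolding DSG_def
  proof (intro conjI ballI impI)
    show "net P s \<subseteq> P \<times> P" using net_subset[OF pr] .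
  next
    fix v w assume "v \<in> P" "w \<in> P" "d v w = 1"
    then show "(v, w) \<in> net P s" using units by auto
  next
    fix u assume "u \<in> P"
    then show "dominating P d u (Nb (net P s) u)"
      using bal by (simp add: balanced_profile_def admissible_def Nb_net)
  next
    fix u assume "u \<in> P"
    then show "\<not> (\<exists>N'. N' \<subseteq> P - {u} \<and>
          (\<exists>x\<in>Nb (net P s) u. N' = Nb (net P s) u - {x} \<or>
             (\<exists>y\<in>P - {u}. N' = (Nb (net P s) u - {x}) \<union> {y})) \<and>
          {v \<in> P. d u v = 1} \<subseteq> N' \<and> dominating P d u N' \<and>
          card ({v \<in> N'. d u v = 2} \<inter> W11 (net P s) d u) < card (W2plus (net P s) d u))"
      using balanced_profile_no_improving_swap[OF met fin pr \<alpha> bal] leD by blast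
  qed
  moreover have "bal_val \<alpha> (net P s) d u \<le> bal_val \<alpha> (replace_out (net P s) u N) d u"
    if u: "u \<in> P" and "{v \<in> P. d u v = 1} \<subseteq> N" and "dominating P d u N" for u N
  proof -
    have "admissible P d u N" using that by (simp add: admissible_def)
    then show ?thesis
      using bal u bal_val_net[OF pr u units] bal_val_replace_out_net[OF pr u units]
      by (simp add: balanced_profile_def)
  qed
  ultimately show "BDSG P d \<alpha> (net P s)" by (simp add: BDSG_def)
qed

theorem theorem2p7:
  fixes P :: "'a set" and d :: "'a \<Rightarrow> 'a \<Rightarrow> nat" and \<alpha> :: real
  assumes "finite P" and "one_two_metric P d" and "\<alpha> > 0"
  shows "\<exists>Z0::real. \<forall>Z \<ge> Z0. \<forall>s. profile P s \<longrightarrow>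
           (nash P d \<alpha> Z s \<longleftrightarrow> BDSG P d \<alpha> (net P s))"
proof (intro exI allI impI)
  fix Z s
  assume "(3/2 + \<alpha>) * real (card P) + 1 \<le> Z" and pr: "profile P s"
  then have "(3/2 + \<alpha>) * real (card P) < Z" by simp
  then show "nash P d \<alpha> Z s \<longleftrightarrow> BDSG P d \<alpha> (net P s)"
    using nash_iff_balanced_profile[OF assms(2,1) pr assms(3)]
      BDSG_net_iff_balanced_profile[OF assms(2,1) pr assms(3)]
    by simp
qed

end
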